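(* Let $X$ be a set of pointed Kripke models and $\Lambda$ a normal modal logic sound with respect to $X$. Every clean map $\boldsymbol{f}$ on the modal space $X_{\boldsymbol{\mathcal{L}}_{\Lambda}}$ is total and well-defined: for every precondition finite multi-pointed action model $\Sigma\Gamma$ closing, deterministic and exhaustive over $X$, and every $\boldsymbol{x}\in X_{\boldsymbol{\mathcal{L}}_{\Lambda}}$, the class of $x\otimes\Sigma\Gamma$ in $X_{\boldsymbol{\mathcal{L}}_{\Lambda}}$ exists and does not depend on the choice of representative $x\in\boldsymbol{x}$.
   Context: Signature: countable non-empty sets $\Phi$, $\mathcal{I}$; $\mathcal{L}$: $\varphi ::= \top\mid p\mid\neg\varphi\mid\varphi\wedge\varphi\mid\Box_i\varphi$ on pointed Kripke models (countable non-empty state sets, relations $R_i$, atom valuations), standard semantics. $\boldsymbol{\varphi}$: formulas $\Lambda$-provably equivalent to $\varphi$; $X_{\boldsymbol{\mathcal{L}}_{\Lambda}}=\{\boldsymbol{x}:x\in X\}$ with $\boldsymbol{x}=\{y\in X:y\models\varphi\iff x\models\varphi\ \forall\varphi\in\mathcal{L}\}$. A multi-pointed action model is $\Sigma\Gamma=(\llbracket\Sigma\rrbracket,\mathsf{R},pre,post,\Gamma)$: countable non-empty action set, relations $\mathsf{R}_i$ ($i\in\mathcal{I}$), $pre,post:\llbracket\Sigma\rrbracket\to\mathcal{L}$ with each $post(\sigma)$ either $\top$ or a conjunction of literals, $\emptyset\neq\Gamma\subseteq\llbracket\Sigma\rrbracket$. Precondition finite: $\{\boldsymbol{pre(\sigma)}:\sigma\in\llbracket\Sigma\rrbracket\}$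 finite. Exhaustive over $X$: each $x\in X$ satisfies $pre(\sigma)$ for some $\sigma\in\Gamma$. Deterministic over $X$: each $x\in X$ satisfies $pre(\sigma)\wedge pre(\sigma')\to\bot$ for $\sigma\neq\sigma'\in\Gamma$. Product update $Ms\otimes\Sigma\Gamma$: states $\{(s,\sigma):Ms\models pre(\sigma)\}$, $R'_i=\{((s,\sigma),(t,\tau)):(s,t)\in R_i,(\sigma,\tau)\in\mathsf{R}_i\}$, $\llbracket p\rrbracket'=\{(s,\sigma):s\in\llbracket p\rrbracket,post(\sigma)\not\models\neg p\}\cup\{(s,\sigma):post(\sigma)\models p\}$, designated state $(s,\sigma)$ with $\sigma\in\Gamma$, $Ms\models pre(\sigma)$. Closing over $X$: $x\otimes\Sigma\Gamma\in X$ for all $x\in X$. A map $\boldsymbol{f}$ on $X_{\boldsymbol{\mathcal{L}}_{\Lambda}}$ is clean if such a precondition finite $\Sigma\Gamma$, closing, deterministic and exhaustive over $X$, satisfies $\boldsymbol{f}(\boldsymbol{x})=\boldsymbol{y}$ iff $x\otimes\Sigma\Gamma\in\boldsymbol{y}$. *)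

theory Defs
  imports Main "HOL-Library.Countable" "HOL-Library.Nat_Bijection"
begin

datatype ('p, 'i) fm = Top | Atom 'p | Neg "('p,'i) fm" | Conj "('p,'i) fm" "('p,'i) fm"
  | Box 'i "('p,'i) fm"

definition Imp :: "('p,'i) fm \<Rightarrow> ('p,'i) fm \<Rightarrow> ('p,'i) fm" where
  "Imp a b = Neg (Conj a (Neg b))"

definition Iff :: "('p,'i) fm \<Rightarrow> ('p,'i) fm \<Rightarrow> ('p,'i) fm" where
  "Iff a b = Conj (Imp a b) (Imp b a)"

definition Bot :: "('p,'i) fm" where
  "Bot = Neg Top"

section \<open>Kripke models (countable state sets, represented as subsets of nat)\<close>

record ('p, 'i) kmodel =
  W :: "nat set"
  Rel :: "'i \<Rightarrow> (nat \<times> nat) set"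
  Val :: "'p \<Rightarrow> nat set"

type_synonym ('p, 'i) pmodel = "('p,'i) kmodel \<times> nat"

definition wf_model :: "('p,'i) kmodel \<Rightarrow> bool" where
  "wf_model M \<longleftrightarrow> W M \<noteq> {} \<and> (\<forall>i. Rel M i \<subseteq> W M \<times> W M) \<and> (\<forall>p. Val M p \<subseteq> W M)"

definition wf_pmodel :: "('p,'i) pmodel \<Rightarrow> bool" where
  "wf_pmodel x \<longleftrightarrow> wf_model (fst x) \<and> snd x \<in> W (fst x)"

fun sat :: "('p,'i) kmodel \<Rightarrow> nat \<Rightarrow> ('p,'i) fm \<Rightarrow> bool" where
  "sat M s Top = True"
| "sat M s (Atom p) = (s \<in> Val M p)"
| "sat M s (Neg a) = (\<not> sat M s a)"
| "sat M s (Conj a b) = (sat M s a \<and> sat M s b)"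
| "sat M s (Box i a) = (\<forall>t. (s, t) \<in> Rel M i \<longrightarrow> sat M t a)"

definition psat :: "('p,'i) pmodel \<Rightarrow> ('p,'i) fm \<Rightarrow> bool" where
  "psat x a = sat (fst x) (snd x) a"

definition entails :: "('p,'i) fm \<Rightarrow> ('p,'i) fm \<Rightarrow> bool" where
  "entails a b \<longleftrightarrow> (\<forall>x. wf_pmodel x \<longrightarrow> psat x a \<longrightarrow> psat x b)"

definition meq :: "('p,'i) pmodel \<Rightarrow> ('p,'i) pmodel \<Rightarrow> bool" where
  "meq x y \<longleftrightarrow> (\<forall>a. psat x a \<longleftrightarrow> psat y a)"

definition mclass :: "('p,'i) pmodel set \<Rightarrow> ('p,'i) pmodel \<Rightarrow> ('p,'i) pmodel set" where
  "mclass X x = {y \<in> X. meq y x}"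

definition mspace :: "('p,'i) pmodel set \<Rightarrow> ('p,'i) pmodel set set" where
  "mspace X = mclass X ` X"

fun peval :: "(('p,'i) fm \<Rightarrow> bool) \<Rightarrow> ('p,'i) fm \<Rightarrow> bool" where
  "peval v Top = True"
| "peval v (Atom p) = v (Atom p)"
| "peval v (Neg a) = (\<not> peval v a)"
| "peval v (Conj a b) = (peval v a \<and> peval v b)"
| "peval v (Box i a) = v (Box i a)"

definition tautology :: "('p,'i) fm \<Rightarrow> bool" where
  "tautology a \<longleftrightarrow> (\<forall>v. peval v a)"

fun subst :: "('p \<Rightarrow> ('p,'i) fm) \<Rightarrow> ('p,'i) fm \<Rightarrow> ('p,'i) fm" where
  "subst f Top = Top"
| "subst f (Atom p) = f p"
| "subst f (Neg a) = Neg (subst f a)"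
| "subst f (Conj a b) = Conj (subst f a) (subst f b)"
| "subst f (Box i a) = Box i (subst f a)"

definition normal_logic :: "('p,'i) fm set \<Rightarrow> bool" where
  "normal_logic \<Lambda> \<longleftrightarrow>
     (\<forall>a. tautology a \<longrightarrow> a \<in> \<Lambda>)
   \<and> (\<forall>i a b. Imp (Box i (Imp a b)) (Imp (Box i a) (Box i b)) \<in> \<Lambda>)
   \<and> (\<forall>a b. a \<in> \<Lambda> \<longrightarrow> Imp a b \<in> \<Lambda> \<longrightarrow> b \<in> \<Lambda>)
   \<and> (\<forall>i a. a \<in> \<Lambda> \<longrightarrow> Box i a \<in> \<Lambda>)
   \<and> (\<forall>f a. a \<in> \<Lambda> \<longrightarrow> subst f a \<in> \<Lambda>)"

definition sound_wrt :: "('p,'i) fm set \<Rightarrow> ('p,'i) pmodel set \<Rightarrow> bool" where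
  "sound_wrt \<Lambda> X \<longleftrightarrow> (\<forall>a\<in>\<Lambda>. \<forall>x\<in>X. psat x a)"

definition pclass :: "('p,'i) fm set \<Rightarrow> ('p,'i) fm \<Rightarrow> ('p,'i) fm set" where
  "pclass \<Lambda> a = {b. Iff a b \<in> \<Lambda>}"

record ('p, 'i) amodel =
  Act :: "nat set"
  ARel :: "'i \<Rightarrow> (nat \<times> nat) set"
  pre :: "nat \<Rightarrow> ('p,'i) fm"
  post :: "nat \<Rightarrow> ('p,'i) fm"

inductive lit_conj :: "('p,'i) fm \<Rightarrow> bool" where
  "lit_conj (Atom p)"
| "lit_conj (Neg (Atom p))"
| "lit_conj a \<Longrightarrow> lit_conj b \<Longrightarrow> lit_conj (Conj a b)"

definition wf_amodel :: "('p,'i) amodel \<Rightarrow> nat set \<Rightarrow> bool" where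
  "wf_amodel E \<Gamma> \<longleftrightarrow> Act E \<noteq> {} \<and> (\<forall>i. ARel E i \<subseteq> Act E \<times> Act E)
     \<and> (\<forall>\<sigma>\<in>Act E. post E \<sigma> = Top \<or> lit_conj (post E \<sigma>))
     \<and> \<Gamma> \<noteq> {} \<and> \<Gamma> \<subseteq> Act E"

definition precondition_finite :: "('p,'i) fm set \<Rightarrow> ('p,'i) amodel \<Rightarrow> bool" where
  "precondition_finite \<Lambda> E \<longleftrightarrow> finite ((\<lambda>\<sigma>. pclass \<Lambda> (pre E \<sigma>)) ` Act E)"

definition exhaustive :: "('p,'i) amodel \<Rightarrow> nat set \<Rightarrow> ('p,'i) pmodel set \<Rightarrow> bool" where
  "exhaustive E \<Gamma> X \<longleftrightarrow> (\<forall>x\<in>X. \<exists>\<sigma>\<in>\<Gamma>. psat x (pre E \<sigma>))"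

definition deterministic :: "('p,'i) amodel \<Rightarrow> nat set \<Rightarrow> ('p,'i) pmodel set \<Rightarrow> bool" where
  "deterministic E \<Gamma> X \<longleftrightarrow>
     (\<forall>x\<in>X. \<forall>\<sigma>\<in>\<Gamma>. \<forall>\<sigma>'\<in>\<Gamma>. \<sigma> \<noteq> \<sigma>' \<longrightarrow> psat x (Imp (Conj (pre E \<sigma>) (pre E \<sigma>')) Bot))"

section \<open>Product update (pairs of states/actions encoded into nat)\<close>

definition upd_model :: "('p,'i) kmodel \<Rightarrow> ('p,'i) amodel \<Rightarrow> ('p,'i) kmodel" where
  "upd_model M E =
    (let S = {prod_encode (s, \<sigma>) | s \<sigma>. s \<in> W M \<and> \<sigma> \<in> Act E \<and> sat M s (pre E \<sigma>)} in
     \<lparr> W = S,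
       Rel = (\<lambda>i. {(prod_encode (s, \<sigma>), prod_encode (t, \<tau>)) | s \<sigma> t \<tau>.
                    prod_encode (s, \<sigma>) \<in> S \<and> prod_encode (t, \<tau>) \<in> S \<and>
                    (s, t) \<in> Rel M i \<and> (\<sigma>, \<tau>) \<in> ARel E i}),
       Val = (\<lambda>p. {prod_encode (s, \<sigma>) | s \<sigma>. prod_encode (s, \<sigma>) \<in> S \<and>
                    ((s \<in> Val M p \<and> \<not> entails (post E \<sigma>) (Neg (Atom p)))
                     \<or> entails (post E \<sigma>) (Atom p))}) \<rparr>)"

definition upd :: "('p,'i) pmodel \<Rightarrow> ('p,'i) amodel \<Rightarrow> nat set \<Rightarrow> ('p,'i) pmodel" where
  "upd x E \<Gamma> = (upd_model (fst x) E,
      prod_encode (snd x, THE \<sigma>. \<sigma> \<in> \<Gamma> \<and> psat x (pre E \<sigma>)))"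

definition closing :: "('p,'i) amodel \<Rightarrow> nat set \<Rightarrow> ('p,'i) pmodel set \<Rightarrow> bool" where
  "closing E \<Gamma> X \<longleftrightarrow> (\<forall>x\<in>X. upd x E \<Gamma> \<in> X)"

end

theory Submission
  imports Defs
begin

text \<open>The truth of a formula at a point (s, \<sigma>) of the product update is expressed by a formula
  T \<sigma> at s, uniformly in the model, as long as s satisfies \<Lambda>. The box case needs a finite
  conjunction over the successors of \<sigma>; precondition finiteness makes it finite once every
  precondition is replaced by a canonical representative of its \<Lambda>-class, which is harmless at
  points satisfying \<Lambda>. Modally equivalent points with the same designated action therefore have
  modally equivalent updates, and determinism plus exhaustiveness make this action unique.\<close>

lemma sat_Imp [simp]: "sat M s (Imp a b) \<longleftrightarrow> (sat M s a \<longrightarrow> sat M s b)"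
  by (simp add: Imp_def)

lemma sat_Iff [simp]: "sat M s (Iff a b) \<longleftrightarrow> (sat M s a \<longleftrightarrow> sat M s b)"
  by (auto simp add: Iff_def)

lemma sat_Bot [simp]: "\<not> sat M s Bot"
  by (simp add: Bot_def)

fun conjs :: "('p,'i) fm list \<Rightarrow> ('p,'i) fm" where
  "conjs [] = Top"
| "conjs (a # as) = Conj a (conjs as)"

lemma sat_conjs: "sat M s (conjs as) \<longleftrightarrow> (\<forall>a\<in>set as. sat M s a)"
  by (induction as) auto

definition Conjs :: "('p,'i) fm set \<Rightarrow> ('p,'i) fm" where
  "Conjs A = conjs (SOME as. set as = A)"

lemma sat_Conjs: "finite A \<Longrightarrow> sat M s (Conjs A) \<longleftrightarrow> (\<forall>a\<in>A. sat M s a)"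
  unfolding Conjs_def sat_conjs by (metis (mono_tags) finite_list someI_ex)

definition sat_logic :: "('p,'i) fm set \<Rightarrow> ('p,'i) kmodel \<Rightarrow> nat \<Rightarrow> bool" where
  "sat_logic \<Lambda> M s \<longleftrightarrow> (\<forall>a\<in>\<Lambda>. sat M s a)"

lemma sat_logic_Rel:
  "normal_logic \<Lambda> \<Longrightarrow> sat_logic \<Lambda> M s \<Longrightarrow> (s, t) \<in> Rel M i \<Longrightarrow> sat_logic \<Lambda> M t"
  unfolding sat_logic_def normal_logic_def by (metis sat.simps(5))

lemma Iff_refl_in_logic: "normal_logic \<Lambda> \<Longrightarrow> Iff a a \<in> \<Lambda>"
  unfolding normal_logic_def tautology_def by (auto simp: Iff_def Imp_def)

definition canonical_rep :: "('p,'i) fm set \<Rightarrow> ('p,'i) fm \<Rightarrow> ('p,'i) fm" where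
  "canonical_rep \<Lambda> a = (SOME b. b \<in> pclass \<Lambda> a)"

lemma sat_canonical_rep:
  assumes "normal_logic \<Lambda>" and "sat_logic \<Lambda> M s"
  shows "sat M s (canonical_rep \<Lambda> a) \<longleftrightarrow> sat M s a"
proof -
  have "a \<in> pclass \<Lambda> a"
    using Iff_refl_in_logic[OF assms(1)] by (simp add: pclass_def)
  then have "Iff a (canonical_rep \<Lambda> a) \<in> \<Lambda>"
    unfolding canonical_rep_def by (metis pclass_def mem_Collect_eq someI)
  with assms(2) show ?thesis
    unfolding sat_logic_def by auto
qed

lemma finite_canonical_rep_pre:
  assumes "precondition_finite \<Lambda> E"
  shows "finite ((\<lambda>\<tau>. canonical_rep \<Lambda> (pre E \<tau>)) ` Act E)"
proof -
  have "(\<lambda>\<tau>. canonical_rep \<Lambda> (pre E \<tau>)) ` Act E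
      = (\<lambda>C. SOME b. b \<in> C) ` (\<lambda>\<tau>. pclass \<Lambda> (pre E \<tau>)) ` Act E"
    by (auto simp: canonical_rep_def)
  with assms show ?thesis
    unfolding precondition_finite_def by simp
qed

lemma W_upd_model:
  "prod_encode (s, \<sigma>) \<in> W (upd_model M E) \<longleftrightarrow> s \<in> W M \<and> \<sigma> \<in> Act E \<and> sat M s (pre E \<sigma>)"
  unfolding upd_model_def Let_def by (auto simp: prod_encode_eq)

lemma Rel_upd_model:
  "(prod_encode (s, \<sigma>), u) \<in> Rel (upd_model M E) i \<longleftrightarrow>
     (\<exists>t \<tau>. u = prod_encode (t, \<tau>) \<and> prod_encode (s, \<sigma>) \<in> W (upd_model M E)
       \<and> prod_encode (t, \<tau>) \<in> W (upd_model M E) \<and> (s, t) \<in> Rel M i \<and> (\<sigma>, \<tau>) \<in> ARel E i)"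
  unfolding W_upd_model unfolding upd_model_def Let_def by (auto simp: prod_encode_eq)

lemma Val_upd_model:
  "prod_encode (s, \<sigma>) \<in> Val (upd_model M E) p \<longleftrightarrow> prod_encode (s, \<sigma>) \<in> W (upd_model M E) \<and>
     ((s \<in> Val M p \<and> \<not> entails (post E \<sigma>) (Neg (Atom p))) \<or> entails (post E \<sigma>) (Atom p))"
  unfolding W_upd_model unfolding upd_model_def Let_def by (auto simp: prod_encode_eq)

lemma sat_upd_model_Box:
  assumes "wf_model M" and "s \<in> W M" and "\<sigma> \<in> Act E" and "sat M s (pre E \<sigma>)"
  shows "sat (upd_model M E) (prod_encode (s, \<sigma>)) (Box i \<phi>) \<longleftrightarrow>
    (\<forall>t \<tau>. (s, t) \<in> Rel M i \<longrightarrow> \<tau> \<in> Act E \<longrightarrow> (\<sigma>, \<tau>) \<in> ARel E i \<longrightarrow> sat M t (pre E \<tau>)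
       \<longrightarrow> sat (upd_model M E) (prod_encode (t, \<tau>)) \<phi>)"
proof -
  have "(s, t) \<in> Rel M i \<Longrightarrow> t \<in> W M" for t
    using assms(1) unfolding wf_model_def by blast
  with assms(2-4) show ?thesis
    by (auto simp: Rel_upd_model W_upd_model)
qed

definition translates :: "('p,'i) fm set \<Rightarrow> ('p,'i) amodel \<Rightarrow> ('p,'i) fm \<Rightarrow> (nat \<Rightarrow> ('p,'i) fm) \<Rightarrow> bool"
  where "translates \<Lambda> E \<phi> T \<longleftrightarrow>
    (\<forall>\<sigma>\<in>Act E. \<forall>M s. wf_model M \<longrightarrow> sat_logic \<Lambda> M s \<longrightarrow> s \<in> W M \<longrightarrow> sat M s (pre E \<sigma>) \<longrightarrow>
       (sat (upd_model M E) (prod_encode (s, \<sigma>)) \<phi> \<longleftrightarrow> sat M s (T \<sigma>)))"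

lemma translates_Box:
  fixes i :: 'i
  assumes normal: "normal_logic \<Lambda>" and prefin: "precondition_finite \<Lambda> E"
    and T: "translates \<Lambda> E \<phi> T" and finT: "finite (T ` Act E)"
  defines "boxes \<equiv> \<lambda>\<sigma>. {Box i (Imp (canonical_rep \<Lambda> (pre E \<tau>)) (T \<tau>)) | \<tau>.
                          \<tau> \<in> Act E \<and> (\<sigma>, \<tau>) \<in> ARel E i}"
  shows "translates \<Lambda> E (Box i \<phi>) (\<lambda>\<sigma>. Conjs (boxes \<sigma>))"
    and "finite ((\<lambda>\<sigma>. Conjs (boxes \<sigma>)) ` Act E)"
proof -
  define all_boxes where "all_boxes =
    (\<lambda>(a, b). Box i (Imp a b)) ` ((\<lambda>\<tau>. canonical_rep \<Lambda> (pre E \<tau>)) ` Act E \<times> T ` Act E)"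
  have fin_all: "finite all_boxes"
    unfolding all_boxes_def using finite_canonical_rep_pre[OF prefin] finT by blast
  have sub: "boxes \<sigma> \<subseteq> all_boxes" for \<sigma>
    unfolding boxes_def all_boxes_def by force
  then have "finite (boxes \<sigma>)" for \<sigma>
    using fin_all finite_subset by blast
  then have sat_boxes: "sat M s (Conjs (boxes \<sigma>)) \<longleftrightarrow>
      (\<forall>\<tau>\<in>Act E. (\<sigma>, \<tau>) \<in> ARel E i \<longrightarrow>
        (\<forall>t. (s, t) \<in> Rel M i \<longrightarrow> sat M t (canonical_rep \<Lambda> (pre E \<tau>)) \<longrightarrow> sat M t (T \<tau>)))"
    for M s \<sigma>
    by (auto simp: sat_Conjs boxes_def)
  show "translates \<Lambda> E (Box i \<phi>) (\<lambda>\<sigma>. Conjs (boxes \<sigma>))"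
    unfolding translates_def
  proof (intro ballI allI impI)
    fix \<sigma> M s
    assume \<sigma>: "\<sigma> \<in> Act E" and M: "wf_model M" and s: "sat_logic \<Lambda> M s" "s \<in> W M"
      and pre: "sat M s (pre E \<sigma>)"
    have succ: "sat_logic \<Lambda> M t \<and> t \<in> W M" if "(s, t) \<in> Rel M i" for t
      using sat_logic_Rel[OF normal s(1) that] M that unfolding wf_model_def by blast
    have step: "sat (upd_model M E) (prod_encode (t, \<tau>)) \<phi> \<longleftrightarrow> sat M t (T \<tau>)"
      if "(s, t) \<in> Rel M i" "\<tau> \<in> Act E" "sat M t (pre E \<tau>)" for t \<tau>
      using T succ[OF that(1)] M that(2,3) unfolding translates_def by blast
    have canon: "sat M t (canonical_rep \<Lambda> a) \<longleftrightarrow> sat M t a" if "(s, t) \<in> Rel M i" for t a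
      using sat_canonical_rep[OF normal] succ[OF that] by blast
    show "sat (upd_model M E) (prod_encode (s, \<sigma>)) (Box i \<phi>) \<longleftrightarrow> sat M s (Conjs (boxes \<sigma>))"
      unfolding sat_upd_model_Box[OF M s(2) \<sigma> pre] sat_boxes using step canon by blast
  qed
  show "finite ((\<lambda>\<sigma>. Conjs (boxes \<sigma>)) ` Act E)"
  proof (rule finite_subset)
    show "(\<lambda>\<sigma>. Conjs (boxes \<sigma>)) ` Act E \<subseteq> Conjs ` Pow all_boxes"
      using sub by blast
    show "finite (Conjs ` Pow all_boxes)"
      using fin_all by simp
  qed
qed

lemma translation_exists:
  assumes "normal_logic \<Lambda>" and "precondition_finite \<Lambda> E"
  shows "\<exists>T. translates \<Lambda> E \<phi> T \<and> finite (T ` Act E)"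
proof (induction \<phi>)
  case Top
  have "finite ((\<lambda>_. Top) ` Act E)"
    by (rule finite_subset[of _ "{Top}"]) auto
  then show ?case
    by (intro exI[of _ "\<lambda>_. Top"]) (auto simp: translates_def)
next
  case (Atom p)
  let ?T = "\<lambda>\<sigma>. if entails (post E \<sigma>) (Atom p) then Top
     else if entails (post E \<sigma>) (Neg (Atom p)) then Bot else Atom p"
  have "finite (?T ` Act E)"
    by (rule finite_subset[of _ "{Top, Bot, Atom p}"]) auto
  moreover have "translates \<Lambda> E (Atom p) ?T"
    by (auto simp: translates_def Val_upd_model W_upd_model)
  ultimately show ?case by blast
next
  case (Neg \<phi>)
  then obtain T where "translates \<Lambda> E \<phi> T" "finite (T ` Act E)"
    by blast
  moreover have "(\<lambda>\<sigma>. Neg (T \<sigma>)) ` Act E = Neg ` T ` Act E"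
    by auto
  ultimately show ?case
    by (intro exI[of _ "\<lambda>\<sigma>. Neg (T \<sigma>)"]) (auto simp: translates_def)
next
  case (Conj \<phi> \<psi>)
  then obtain T U where T: "translates \<Lambda> E \<phi> T" "finite (T ` Act E)"
    and U: "translates \<Lambda> E \<psi> U" "finite (U ` Act E)"
    by blast
  have "(\<lambda>\<sigma>. Conj (T \<sigma>) (U \<sigma>)) ` Act E \<subseteq> case_prod Conj ` (T ` Act E \<times> U ` Act E)"
    by auto
  then have "finite ((\<lambda>\<sigma>. Conj (T \<sigma>) (U \<sigma>)) ` Act E)"
    using T(2) U(2) by (meson finite_SigmaI finite_imageI finite_subset)
  with T(1) U(1) show ?case
    by (intro exI[of _ "\<lambda>\<sigma>. Conj (T \<sigma>) (U \<sigma>)"]) (auto simp: translates_def)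
next
  case (Box i \<phi>)
  then obtain T where "translates \<Lambda> E \<phi> T" "finite (T ` Act E)"
    by blast
  with translates_Box[OF assms] show ?case
    by blast
qed

lemma meq_upd_model:
  assumes normal: "normal_logic \<Lambda>" and prefin: "precondition_finite \<Lambda> E"
    and \<sigma>: "\<sigma> \<in> Act E" and x: "wf_pmodel x" "\<forall>a\<in>\<Lambda>. psat x a" and y: "wf_pmodel y" "\<forall>a\<in>\<Lambda>. psat y a"
    and pre: "psat x (pre E \<sigma>)" and xy: "meq x y"
  shows "meq (upd_model (fst x) E, prod_encode (snd x, \<sigma>)) (upd_model (fst y) E, prod_encode (snd y, \<sigma>))"
  unfolding meq_def
proof
  fix \<phi>
  obtain T where T: "translates \<Lambda> E \<phi> T"
    using translation_exists[OF normal prefin] by blast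
  have "psat y (pre E \<sigma>)"
    using pre xy unfolding meq_def by blast
  then show "psat (upd_model (fst x) E, prod_encode (snd x, \<sigma>)) \<phi>
        \<longleftrightarrow> psat (upd_model (fst y) E, prod_encode (snd y, \<sigma>)) \<phi>"
    using T \<sigma> x y pre xy
    unfolding translates_def meq_def psat_def wf_pmodel_def sat_logic_def by auto
qed

lemma unique_designated_action:
  assumes "deterministic E \<Gamma> X" and "exhaustive E \<Gamma> X" and "x \<in> X"
  shows "\<exists>!\<sigma>. \<sigma> \<in> \<Gamma> \<and> psat x (pre E \<sigma>)"
proof -
  obtain \<sigma> where "\<sigma> \<in> \<Gamma>" "psat x (pre E \<sigma>)"
    using assms(2,3) unfolding exhaustive_def by blast
  moreover have "\<tau> = \<sigma>" if "\<tau> \<in> \<Gamma>" "psat x (pre E \<tau>)" for \<tau>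
    using assms(1,3) calculation that unfolding deterministic_def psat_def by fastforce
  ultimately show ?thesis
    by blast
qed

lemma upd_eq:
  assumes "\<exists>!\<sigma>. \<sigma> \<in> \<Gamma> \<and> psat x (pre E \<sigma>)" and "\<sigma> \<in> \<Gamma>" and "psat x (pre E \<sigma>)"
  shows "upd x E \<Gamma> = (upd_model (fst x) E, prod_encode (snd x, \<sigma>))"
  unfolding upd_def using the1_equality[OF assms(1)] assms(2,3) by simp

lemma meq_of_mclass_eq: "y \<in> X \<Longrightarrow> mclass X y = mclass X x \<Longrightarrow> meq y x"
  unfolding mclass_def meq_def by blast

lemma mclass_eq_of_meq: "meq u v \<Longrightarrow> mclass X u = mclass X v"
  unfolding mclass_def meq_def by simp

theorem proposition32:
  fixes X :: "('p::countable, 'i::countable) pmodel set"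
    and \<Lambda> :: "('p, 'i) fm set"
  assumes X_wf: "\<forall>x\<in>X. wf_pmodel x"
    and normal: "normal_logic \<Lambda>"
    and sound: "sound_wrt \<Lambda> X"
  shows "\<forall>(E :: ('p,'i) amodel) \<Gamma>.
           wf_amodel E \<Gamma> \<and> precondition_finite \<Lambda> E \<and> closing E \<Gamma> X
           \<and> deterministic E \<Gamma> X \<and> exhaustive E \<Gamma> X \<longrightarrow>
           (\<forall>x\<in>X. (\<exists>!\<sigma>. \<sigma> \<in> \<Gamma> \<and> psat x (pre E \<sigma>))
                   \<and> upd x E \<Gamma> \<in> X
                   \<and> mclass X (upd x E \<Gamma>) \<in> mspace X
                   \<and> (\<forall>y\<in>X. mclass X y = mclass X x \<longrightarrow>
                          mclass X (upd y E \<Gamma>) = mclass X (upd x E \<Gamma>)))"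
proof (intro allI impI ballI conjI)
  fix E :: "('p,'i) amodel" and \<Gamma> x
  assume H: "wf_amodel E \<Gamma> \<and> precondition_finite \<Lambda> E \<and> closing E \<Gamma> X
           \<and> deterministic E \<Gamma> X \<and> exhaustive E \<Gamma> X" and x: "x \<in> X"
  then have unique: "\<And>z. z \<in> X \<Longrightarrow> \<exists>!\<sigma>. \<sigma> \<in> \<Gamma> \<and> psat z (pre E \<sigma>)"
    using unique_designated_action by blast
  show "\<exists>!\<sigma>. \<sigma> \<in> \<Gamma> \<and> psat x (pre E \<sigma>)"
    using unique[OF x] .
  show "upd x E \<Gamma> \<in> X"
    using H x unfolding closing_def by blast
  then show "mclass X (upd x E \<Gamma>) \<in> mspace X"
    unfolding mspace_def by blast
  fix y assume y: "y \<in> X" and "mclass X y = mclass X x"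
  then have yx: "meq y x"
    by (rule meq_of_mclass_eq)
  obtain \<sigma> where \<sigma>: "\<sigma> \<in> \<Gamma>" "psat x (pre E \<sigma>)"
    using unique[OF x] by blast
  then have "psat y (pre E \<sigma>)"
    using yx unfolding meq_def by blast
  have "\<sigma> \<in> Act E" and prefin: "precondition_finite \<Lambda> E"
    using H \<sigma>(1) unfolding wf_amodel_def by blast+
  moreover have "wf_pmodel z" and "\<forall>a\<in>\<Lambda>. psat z a" if "z \<in> X" for z
    using X_wf sound that unfolding sound_wrt_def by blast+
  ultimately have "meq (upd_model (fst y) E, prod_encode (snd y, \<sigma>))
                       (upd_model (fst x) E, prod_encode (snd x, \<sigma>))"
    using meq_upd_model[OF normal] x y yx \<open>psat y (pre E \<sigma>)\<close> by blast
  then have "meq (upd y E \<Gamma>) (upd x E \<Gamma>)"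
    using upd_eq[OF unique[OF y] \<sigma>(1) \<open>psat y (pre E \<sigma>)\<close>] upd_eq[OF unique[OF x] \<sigma>] by simp
  then show "mclass X (upd y E \<Gamma>) = mclass X (upd x E \<Gamma>)"
    by (rule mclass_eq_of_meq)
qed

end
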